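(* Let $L, e_i, e_j, e_h, e_w, e_{v_i}, e_{v_j}$ be mutually independent random variables, where $L, e_i, e_j, e_h, e_w$ are mean-zero Gaussian. For constants $a_i, a_j, a_h, a_w$ define $X_m = a_m L + e_m$ for $m \in \{i,j,h,w\}$. Let $f, g$ be measurable functions such that $V_i = f(X_i, e_{v_i})$ and $V_j = g(X_j, e_{v_j})$ have finite second moments. Then the tetrad constraint for the partition that does not pair $V_i$ with $V_j$ holds: $$\mathrm{Cov}(V_i,X_w)\,\mathrm{Cov}(V_j,X_h) = \mathrm{Cov}(V_i,X_h)\,\mathrm{Cov}(V_j,X_w).$$
   Context: This describes a pure 1-factor measurement model with a single latent common cause $L$ of linear Gaussian indicators, in which two of the indicators $X_i, X_j$ are replaced by variables $V_i, V_j$ that are functions of them and of independent noise terms. *)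

theory Defs
  imports "HOL-Probability.Probability"
begin

text \<open>Events generated by a random variable X with values in the measurable space N
  (the same family used in the library's indep_vars_def2).\<close>
definition rv_events :: "'s measure \<Rightarrow> ('s \<Rightarrow> 'a) \<Rightarrow> 'a measure \<Rightarrow> 's set set" where
  "rv_events M X N = {X -` A \<inter> space M | A. A \<in> sets N}"

definition cov :: "'s measure \<Rightarrow> ('s \<Rightarrow> real) \<Rightarrow> ('s \<Rightarrow> real) \<Rightarrow> real" where
  "cov M X Y = (\<integral>w. (X w - (\<integral>v. X v \<partial>M)) * (Y w - (\<integral>v. Y v \<partial>M)) \<partial>M)"

end

theory Submission
  imports Defs
begin

text \<open>If V is independent of x, then Cov(V, b L + x) = b Cov(V, L). Now V_i is a
  function of (L, e_i, e_vi), which is independent of e_h and e_w, and likewise for V_j;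
  so both sides of the tetrad equation equal a_w a_h Cov(V_i, L) Cov(V_j, L).
  Gaussianity is used only for the existence of second moments.\<close>

lemma integrable_mult_of_square_integrable:
  fixes X Y :: "'s \<Rightarrow> real"
  assumes "X \<in> borel_measurable M" "Y \<in> borel_measurable M"
    and "integrable M (\<lambda>w. (X w)\<^sup>2)" "integrable M (\<lambda>w. (Y w)\<^sup>2)"
  shows "integrable M (\<lambda>w. X w * Y w)"
proof (rule Bochner_Integration.integrable_bound)
  show "integrable M (\<lambda>w. (X w)\<^sup>2 + (Y w)\<^sup>2)"
    using assms by auto
  show "(\<lambda>w. X w * Y w) \<in> borel_measurable M"
    using assms by auto
  have "\<bar>x * y\<bar> \<le> x\<^sup>2 + y\<^sup>2" for x y :: real
    using sum_squares_bound[of "\<bar>x\<bar>" "\<bar>y\<bar>"] mult_nonneg_nonneg[OF abs_ge_zero abs_ge_zero, of x y]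
    by (simp only: abs_mult power2_abs)
  then show "AE w in M. norm (X w * Y w) \<le> norm ((X w)\<^sup>2 + (Y w)\<^sup>2)"
    by simp
qed

lemma (in prob_space) cov_eq:
  assumes "integrable M X" "integrable M Y" "integrable M (\<lambda>w. X w * Y w)"
  shows "cov M X Y = expectation (\<lambda>w. X w * Y w) - expectation X * expectation Y"
proof -
  define a b where "a = expectation X" and "b = expectation Y"
  have "(\<lambda>w. (X w - a) * (Y w - b)) = (\<lambda>w. (X w * Y w - b * X w) - (a * Y w - a * b))"
    by (simp add: fun_eq_iff algebra_simps)
  then have "cov M X Y = expectation (\<lambda>w. (X w * Y w - b * X w) - (a * Y w - a * b))"
    by (simp add: cov_def a_def b_def)
  also have "\<dots> = expectation (\<lambda>w. X w * Y w) - b * a - (a * b - a * b)"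
    using assms by (simp add: a_def b_def prob_space)
  finally show ?thesis
    by (simp add: a_def b_def)
qed

lemma (in prob_space) cov_linear_right:
  assumes "integrable M X" "integrable M Y" "integrable M Z"
    and "integrable M (\<lambda>w. X w * Y w)" "integrable M (\<lambda>w. X w * Z w)"
  shows "cov M X (\<lambda>w. b * Y w + Z w) = b * cov M X Y + cov M X Z"
proof -
  have "(\<lambda>w. X w * (b * Y w + Z w)) = (\<lambda>w. b * (X w * Y w) + X w * Z w)"
    by (simp add: fun_eq_iff algebra_simps)
  with assms have "cov M X (\<lambda>w. b * Y w + Z w) =
      b * expectation (\<lambda>w. X w * Y w) + expectation (\<lambda>w. X w * Z w)
      - expectation X * (b * expectation Y + expectation Z)"
    by (simp add: cov_eq)
  with assms show ?thesis
    by (simp add: cov_eq algebra_simps)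
qed

lemma (in prob_space) cov_indep_var_eq_0:
  assumes "indep_var borel X borel Y" "integrable M X" "integrable M Y"
  shows "cov M X Y = 0"
  using cov_eq[OF assms(2,3) indep_var_integrable[OF assms]] indep_var_lebesgue_integral[OF assms]
  by simp

lemma (in prob_space) cov_add_indep_noise:
  assumes X: "X \<in> borel_measurable M" "integrable M (\<lambda>w. (X w)\<^sup>2)"
    and Y: "Y \<in> borel_measurable M" "integrable M (\<lambda>w. (Y w)\<^sup>2)"
    and Z: "integrable M Z" and indep: "indep_var borel X borel Z"
  shows "cov M X (\<lambda>w. b * Y w + Z w) = b * cov M X Y"
proof -
  have iX: "integrable M X" and iY: "integrable M Y"
    using X Y by (simp_all add: square_integrable_imp_integrable)
  have "cov M X (\<lambda>w. b * Y w + Z w) = b * cov M X Y + cov M X Z"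
    using integrable_mult_of_square_integrable[OF X(1) Y(1) X(2) Y(2)]
      indep_var_integrable[OF indep iX Z]
    by (rule cov_linear_right[OF iX iY Z])
  also have "cov M X Z = 0"
    by (rule cov_indep_var_eq_0[OF indep iX Z])
  finally show ?thesis
    by simp
qed

lemma rv_events_Int_stable: "Int_stable (rv_events M X N)"
proof (rule Int_stableI)
  fix a b assume "a \<in> rv_events M X N" "b \<in> rv_events M X N"
  then obtain A B where "A \<in> sets N" "B \<in> sets N" "a = X -` A \<inter> space M" "b = X -` B \<inter> space M"
    unfolding rv_events_def by blast
  then show "a \<inter> b \<in> rv_events M X N"
    unfolding rv_events_def by (intro CollectI exI[of _ "A \<inter> B"]) auto
qed

lemma measurable_sigma_iff_rv_events:
  assumes "X \<in> measurable M N" "G \<subseteq> Pow (space M)"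
  shows "X \<in> measurable (sigma (space M) G) N \<longleftrightarrow> rv_events M X N \<subseteq> sigma_sets (space M) G"
  using assms measurable_space[OF assms(1)]
  unfolding rv_events_def measurable_def by (auto; blast)

lemma (in prob_space) indep_var_of_indep_sets:
  assumes indep: "indep_sets E I" and stable: "\<And>i. i \<in> I \<Longrightarrow> Int_stable (E i)"
    and "A \<subseteq> I" "B \<subseteq> I" "A \<inter> B = {}"
    and X: "random_variable N1 X" "rv_events M X N1 \<subseteq> sigma_sets (space M) (\<Union>i\<in>A. E i)"
    and Y: "random_variable N2 Y" "rv_events M Y N2 \<subseteq> sigma_sets (space M) (\<Union>i\<in>B. E i)"
  shows "indep_var N1 X N2 Y"
proof -
  have "indep_sets (\<lambda>b. sigma_sets (space M) (\<Union>i\<in>case_bool A B b. E i)) UNIV"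
  proof (rule indep_sets_collect_sigma)
    show "indep_sets E (\<Union>b\<in>UNIV. case_bool A B b)"
      using indep_sets_mono_index[OF _ indep] assms by (simp add: UNIV_bool)
    show "Int_stable (E i)" if "i \<in> case_bool A B b" for i b
      using that stable assms by (auto split: bool.splits)
    show "disjoint_family_on (case_bool A B) UNIV"
      using assms by (auto simp: disjoint_family_on_def split: bool.splits)
  qed
  moreover have "sigma_sets (space M) (rv_events M X N1) \<subseteq> sigma_sets (space M) (\<Union>i\<in>A. E i)"
    "sigma_sets (space M) (rv_events M Y N2) \<subseteq> sigma_sets (space M) (\<Union>i\<in>B. E i)"
    using X(2) Y(2) by (simp_all add: sigma_sets_mono)
  ultimately have "indep_set (sigma_sets (space M) (rv_events M X N1)) (sigma_sets (space M) (rv_events M Y N2))"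
    unfolding indep_set_def by (elim indep_sets_mono_sets) (simp split: bool.split)
  with X(1) Y(1) show ?thesis
    unfolding indep_var_eq rv_events_def by blast
qed

lemma (in prob_space) cov_measured_indicator:
  fixes L e x :: "'a \<Rightarrow> real" and ev :: "'a \<Rightarrow> 'b" and f :: "real \<times> 'b \<Rightarrow> real"
  assumes indep: "indep_sets E I" and stable: "\<And>i. i \<in> I \<Longrightarrow> Int_stable (E i)"
    and idx: "{p, q, r, k} \<subseteq> I" "k \<notin> {p, q, r}"
    and E: "E p = rv_events M L borel" "E q = rv_events M e borel"
      "E r = rv_events M ev N" "E k = rv_events M x borel"
    and rvs: "L \<in> borel_measurable M" "e \<in> borel_measurable M"
      "ev \<in> measurable M N" "x \<in> borel_measurable M" "f \<in> borel_measurable (borel \<Otimes>\<^sub>M N)"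
    and moments: "integrable M (\<lambda>w. (f (a * L w + e w, ev w))\<^sup>2)"
      "integrable M (\<lambda>w. (L w)\<^sup>2)" "integrable M x"
  shows "cov M (\<lambda>w. f (a * L w + e w, ev w)) (\<lambda>w. b * L w + x w)
    = b * cov M (\<lambda>w. f (a * L w + e w, ev w)) L"
proof -
  let ?V = "\<lambda>w. f (a * L w + e w, ev w)"
  define G where "G = (\<Union>i\<in>{p, q, r}. E i)"
  have "E i \<subseteq> events" if "i \<in> I" for i
    using indep that unfolding indep_sets_def by blast
  then have G: "G \<subseteq> Pow (space M)"
    using idx sets.sets_into_space unfolding G_def by blast
  have E_G: "E i \<subseteq> sigma_sets (space M) G" if "i \<in> {p, q, r}" for i
    using that unfolding G_def by (intro subset_trans[OF _ sigma_sets_superset_generator]) auto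
  have "L \<in> borel_measurable (sigma (space M) G)"
    using E_G[of p] E(1) by (simp add: measurable_sigma_iff_rv_events[OF rvs(1) G])
  moreover have "e \<in> borel_measurable (sigma (space M) G)"
    using E_G[of q] E(2) by (simp add: measurable_sigma_iff_rv_events[OF rvs(2) G])
  moreover have "ev \<in> measurable (sigma (space M) G) N"
    using E_G[of r] E(3) by (simp add: measurable_sigma_iff_rv_events[OF rvs(3) G])
  ultimately have "?V \<in> borel_measurable (sigma (space M) G)"
    using rvs(5) by measurable
  moreover have V: "?V \<in> borel_measurable M"
    using rvs by measurable
  ultimately have "rv_events M ?V borel \<subseteq> sigma_sets (space M) G"
    by (simp add: measurable_sigma_iff_rv_events[OF _ G])
  moreover have "rv_events M x borel \<subseteq> sigma_sets (space M) (\<Union>i\<in>{k}. E i)"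
    by (simp add: E(4) sigma_sets_superset_generator)
  ultimately have "indep_var borel ?V borel x"
    using idx V rvs(4) unfolding G_def
    by (intro indep_var_of_indep_sets[OF indep stable, of "{p, q, r}" "{k}"]) auto
  then show ?thesis
    by (rule cov_add_indep_noise[OF V moments(1) rvs(1) moments(2,3)])
qed

lemma (in prob_space) normal_distributed_integrable_power:
  assumes "0 < \<sigma>" "distributed M lborel X (normal_density \<mu> \<sigma>)"
  shows "integrable M (\<lambda>w. (X w - \<mu>) ^ k)"
  using distributed_integrable[OF assms(2), of "\<lambda>x. (x - \<mu>) ^ k"] integrable_normal_moment[OF assms(1)]
  by simp

theorem mainTheorem2:
  fixes M :: "'s measure" and Na :: "'a measure" and Nb :: "'b measure"
    and L ei ej eh ew :: "'s \<Rightarrow> real"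
    and evi :: "'s \<Rightarrow> 'a" and evj :: "'s \<Rightarrow> 'b"
    and f :: "real \<times> 'a \<Rightarrow> real" and g :: "real \<times> 'b \<Rightarrow> real"
    and ai aj ah aw sL si sj sh sw :: real
  assumes P: "prob_space M"
    and rv_vi: "evi \<in> measurable M Na"
    and rv_vj: "evj \<in> measurable M Nb"
    and indep: "prob_space.indep_sets M
      (\<lambda>k::nat. if k = 0 then rv_events M L borel
                else if k = 1 then rv_events M ei borel
                else if k = 2 then rv_events M ej borel
                else if k = 3 then rv_events M eh borel
                else if k = 4 then rv_events M ew borel
                else if k = 5 then rv_events M evi Na
                else rv_events M evj Nb) {..<7}"
    and gL: "sL > 0" "distributed M lborel L (normal_density 0 sL)"
    and gi: "si > 0" "distributed M lborel ei (normal_density 0 si)"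
    and gj: "sj > 0" "distributed M lborel ej (normal_density 0 sj)"
    and gh: "sh > 0" "distributed M lborel eh (normal_density 0 sh)"
    and gw: "sw > 0" "distributed M lborel ew (normal_density 0 sw)"
    and f_meas: "f \<in> borel_measurable (borel \<Otimes>\<^sub>M Na)"
    and g_meas: "g \<in> borel_measurable (borel \<Otimes>\<^sub>M Nb)"
    and Vi2: "integrable M (\<lambda>w. (f (ai * L w + ei w, evi w))\<^sup>2)"
    and Vj2: "integrable M (\<lambda>w. (g (aj * L w + ej w, evj w))\<^sup>2)"
  shows "cov M (\<lambda>w. f (ai * L w + ei w, evi w)) (\<lambda>w. aw * L w + ew w)
           * cov M (\<lambda>w. g (aj * L w + ej w, evj w)) (\<lambda>w. ah * L w + eh w)
         = cov M (\<lambda>w. f (ai * L w + ei w, evi w)) (\<lambda>w. ah * L w + eh w)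
           * cov M (\<lambda>w. g (aj * L w + ej w, evj w)) (\<lambda>w. aw * L w + ew w)"
proof -
  interpret prob_space M by (rule P)
  have rvs: "L \<in> borel_measurable M" "ei \<in> borel_measurable M" "ej \<in> borel_measurable M"
    "eh \<in> borel_measurable M" "ew \<in> borel_measurable M"
    using gL gi gj gh gw by (auto dest: distributed_measurable)
  have moments: "integrable M (\<lambda>w. (L w)\<^sup>2)" "integrable M eh" "integrable M ew"
    using normal_distributed_integrable_power[OF gL, of 2]
      normal_distributed_integrable_power[OF gh, of 1]
      normal_distributed_integrable_power[OF gw, of 1] by simp_all
  have "cov M (\<lambda>w. f (ai * L w + ei w, evi w)) (\<lambda>w. aw * L w + ew w)
      = aw * cov M (\<lambda>w. f (ai * L w + ei w, evi w)) L"
    by (rule cov_measured_indicator[OF indep, where p=0 and q=1 and r=5 and k=4 and N=Na])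
      (simp_all add: rv_events_Int_stable rvs moments rv_vi f_meas Vi2)
  moreover have "cov M (\<lambda>w. f (ai * L w + ei w, evi w)) (\<lambda>w. ah * L w + eh w)
      = ah * cov M (\<lambda>w. f (ai * L w + ei w, evi w)) L"
    by (rule cov_measured_indicator[OF indep, where p=0 and q=1 and r=5 and k=3 and N=Na])
      (simp_all add: rv_events_Int_stable rvs moments rv_vi f_meas Vi2)
  moreover have "cov M (\<lambda>w. g (aj * L w + ej w, evj w)) (\<lambda>w. aw * L w + ew w)
      = aw * cov M (\<lambda>w. g (aj * L w + ej w, evj w)) L"
    by (rule cov_measured_indicator[OF indep, where p=0 and q=2 and r=6 and k=4 and N=Nb])
      (simp_all add: rv_events_Int_stable rvs moments rv_vj g_meas Vj2)
  moreover have "cov M (\<lambda>w. g (aj * L w + ej w, evj w)) (\<lambda>w. ah * L w + eh w)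
      = ah * cov M (\<lambda>w. g (aj * L w + ej w, evj w)) L"
    by (rule cov_measured_indicator[OF indep, where p=0 and q=2 and r=6 and k=3 and N=Nb])
      (simp_all add: rv_events_Int_stable rvs moments rv_vj g_meas Vj2)
  ultimately show ?thesis
    by simp
qed

end
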